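(* Let $F\subset\mathbb{C}$ be a perfect closed set, let $(\lambda_i)_{i\in\mathbb{N}}$ be a sequence dense in $F$, and let $(\gamma_i)_{i\in\mathbb{N}}$ be a sequence of strictly positive real numbers with $\sum_{i}\gamma_i<\infty$. Then there exists a sequence of complex numbers $(c_i)_{i\in\mathbb{N}}$ such that (1) $c_i\neq 0$ for all $i$; (2) $|c_i|\le\gamma_i$ for all $i$; (3) the series $\sum_{i=1}^\infty\frac{c_i}{z-\lambda_i}$ converges uniformly on every compact subset of $\mathbb{C}\setminus F$; (4) for all $z\in\mathbb{C}\setminus F$, $\sum_{i=1}^\infty\frac{c_i}{z-\lambda_i}-1\neq 0$.
   Context: A set is perfect if it has no isolated points. *)

theory Defs
  imports "HOL-Analysis.Analysis"
begin

definition perfect_set :: "'a::topological_space set \<Rightarrow> bool" where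
  "perfect_set S \<longleftrightarrow> (\<forall>x\<in>S. x islimpt S)"

end

theory Submission
  imports Defs
begin

text \<open>
  The factor \<open>1 + \<delta> i / (z - lam i)\<close> has its pole at \<open>lam i\<close> and its zero at \<open>lam i - \<delta> i\<close>.
  Since \<open>F\<close> is perfect, Baire's theorem lets us place every zero in \<open>F\<close> but off the countable
  set of poles, with \<open>\<delta> i \<noteq> 0\<close> exactly at the first occurrence of each pole and \<open>\<delta> i\<close> small
  compared with the distances to the earlier poles and with \<open>\<gamma> i\<close>. The partial products expand
  by partial fractions into \<open>1 + (\<Sum>i<n. C n i / (z - lam i))\<close>; the coefficients \<open>C n i\<close>
  converge to residues \<open>C i\<close> that are nonzero at first occurrences and bounded by \<open>2 * \<gamma> i / 3\<close>,
  and Tannery's theorem identifies \<open>1 + (\<Sum>i. C i / (z - lam i))\<close> with the infinite product,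
  which does not vanish outside \<open>F\<close>. Finally each repeated pole gets a small positive
  coefficient, subtracted from the first occurrence of the same pole so that the series is
  unchanged, and \<open>c\<close> is minus the resulting coefficient sequence.
\<close>

lemma perfect_closed_diff_countable_dense:
  fixes F :: "'a::{real_normed_vector,heine_borel} set"
  assumes "closed F" "perfect_set F" "countable A"
  shows "F \<subseteq> closure (F - A)"
proof -
  define \<G> where "\<G> = (\<lambda>a. F - {a}) ` A"
  have "openin (top_of_set F) T \<and> F \<subseteq> closure T" if "T \<in> \<G>" for T
  proof
    obtain a where T: "T = F - {a}" using \<open>T \<in> \<G>\<close> unfolding \<G>_def by blast
    show "openin (top_of_set F) T"
      unfolding T by (intro openin_delete openin_subtopology_self)
    have "x \<in> closure (F - {a})" if "x \<in> F" for x
    proof (cases "x = a")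
      case True
      with assms(2) \<open>x \<in> F\<close> show ?thesis
        by (simp add: perfect_set_def islimpt_in_closure)
    next
      case False
      with \<open>x \<in> F\<close> show ?thesis by (simp add: closure_def)
    qed
    then show "F \<subseteq> closure T" unfolding T by blast
  qed
  moreover have "countable \<G>" unfolding \<G>_def using assms(3) by simp
  ultimately have "F \<subseteq> closure (\<Inter>\<G>)" by (intro Baire assms(1))
  moreover have "\<Inter>\<G> = F - A" if "A \<noteq> {}" unfolding \<G>_def using that by auto
  ultimately show ?thesis by (cases "A = {}") (auto simp: closure_subset[THEN subsetD])
qed

lemma choice_nat_prefix:
  fixes P :: "nat \<Rightarrow> (nat \<Rightarrow> 'a) \<Rightarrow> 'a \<Rightarrow> bool"
  assumes ex: "\<And>n d. \<exists>x. P n d x"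
    and prefix: "\<And>n d d' x. (\<And>j. j < n \<Longrightarrow> d j = d' j) \<Longrightarrow> P n d x \<Longrightarrow> P n d' x"
  shows "\<exists>\<delta>. \<forall>n. P n \<delta> (\<delta> n)"
proof -
  define D where "D = rec_nat (\<lambda>_. undefined) (\<lambda>n d. d(n := SOME x. P n d x))"
  have D_Suc: "D (Suc n) = (D n)(n := SOME x. P n (D n) x)" for n by (simp add: D_def)
  define \<delta> where "\<delta> n = D (Suc n) n" for n
  have D_eq: "D m j = \<delta> j" if "j < m" for m j
    using that by (induction m) (auto simp: D_Suc \<delta>_def less_Suc_eq)
  have "P n \<delta> (\<delta> n)" for n
  proof -
    have "P n (D n) (\<delta> n)" unfolding \<delta>_def D_Suc by (simp add: someI_ex[OF ex])
    then show ?thesis by (rule prefix[rotated]) (simp add: D_eq)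
  qed
  then show ?thesis by blast
qed

lemma partial_fraction_step:
  fixes C e z a b :: "'a::field"
  assumes "z \<noteq> a" "z \<noteq> b" "a \<noteq> b"
  shows "C / (z - a) * (1 + e / (z - b)) = C * (1 + e / (a - b)) / (z - a) + C * e / (b - a) / (z - b)"
proof -
  have "z - a \<noteq> 0" "z - b \<noteq> 0" "a - b \<noteq> 0" "b - a \<noteq> 0" using assms by auto
  then show ?thesis by (simp add: divide_simps) (simp add: algebra_simps)
qed

lemma prod_partial_fractions:
  fixes a d :: "'i \<Rightarrow> 'a::field"
  assumes "finite A" "inj_on a {i\<in>A. d i \<noteq> 0}" "\<And>i. i \<in> A \<Longrightarrow> d i \<noteq> 0 \<Longrightarrow> z \<noteq> a i"
  shows "(\<Prod>i\<in>A. 1 + d i / (z - a i))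
           = 1 + (\<Sum>i\<in>A. d i * (\<Prod>j\<in>A - {i}. 1 + d j / (a i - a j)) / (z - a i))"
  using assms
proof (induction A arbitrary: z rule: finite_induct)
  \<comment> \<open>An index with \<open>d i = 0\<close> contributes the factor 1 even if \<open>z = a i\<close> (division by zero
      gives 0), so only the poles with \<open>d i \<noteq> 0\<close> must be distinct and avoided.\<close>
  case empty
  then show ?case by simp
next
  case (insert k A)
  define c where "c i = d i * (\<Prod>j\<in>A - {i}. 1 + d j / (a i - a j))" for i
  have inj: "inj_on a {i\<in>A. d i \<noteq> 0}"
    using insert.prems(1) by (rule inj_on_subset) auto
  have IH: "(\<Prod>i\<in>A. 1 + d i / (w - a i)) = 1 + (\<Sum>i\<in>A. c i / (w - a i))"
    if "\<And>i. i \<in> A \<Longrightarrow> d i \<noteq> 0 \<Longrightarrow> w \<noteq> a i" for w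
    unfolding c_def using insert.IH[OF inj that] by simp
  have insert_minus: "insert k A - {i} = insert k (A - {i})" if "i \<in> A" for i
    using that insert.hyps(2) by auto
  have c_insert: "d i * (\<Prod>j\<in>insert k A - {i}. 1 + d j / (a i - a j)) = c i * (1 + d k / (a i - a k))"
    if "i \<in> A" for i
    using that insert.hyps by (simp add: insert_minus c_def)
  have c_new: "d k * (\<Prod>j\<in>insert k A - {k}. 1 + d j / (a k - a j)) = d k * (\<Prod>j\<in>A. 1 + d j / (a k - a j))"
    using insert.hyps(2) by simp
  show ?case
  proof (cases "d k = 0")
    case True
    then show ?thesis
      using insert.hyps insert.prems(2) by (simp add: IH c_insert c_new)
  next
    case False
    have zk: "z \<noteq> a k" using False insert.prems(2) by blast
    have ki: "a i \<noteq> a k" if "i \<in> A" "d i \<noteq> 0" for i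
      using insert.prems(1) False that insert.hyps(2) by (auto dest: inj_onD)
    have split: "c i / (z - a i) * (1 + d k / (z - a k))
        = c i * (1 + d k / (a i - a k)) / (z - a i) + d k * (c i / (a k - a i)) / (z - a k)" if "i \<in> A" for i
    proof (cases "d i = 0")
      case False
      then show ?thesis
        using partial_fraction_step[of z "a i" "a k" "c i" "d k"] that insert.prems(2) zk ki
        by (simp add: mult.commute)
    qed (simp add: c_def)
    have "(\<Prod>i\<in>insert k A. 1 + d i / (z - a i)) = (1 + (\<Sum>i\<in>A. c i / (z - a i))) * (1 + d k / (z - a k))"
      using insert.hyps insert.prems(2) by (simp add: IH mult.commute)
    also have "\<dots> = 1 + d k / (z - a k) + (\<Sum>i\<in>A. c i / (z - a i) * (1 + d k / (z - a k)))"
      by (simp only: distrib_right mult_1 sum_distrib_right)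
    also have "\<dots> = 1 + (\<Sum>i\<in>A. c i * (1 + d k / (a i - a k)) / (z - a i))
        + (d k + d k * (\<Sum>i\<in>A. c i / (a k - a i))) / (z - a k)"
    proof -
      have "(\<Sum>i\<in>A. c i / (z - a i) * (1 + d k / (z - a k)))
          = (\<Sum>i\<in>A. c i * (1 + d k / (a i - a k)) / (z - a i)) + (\<Sum>i\<in>A. d k * (c i / (a k - a i))) / (z - a k)"
        by (simp only: split sum.distrib[symmetric] sum_divide_distrib cong: sum.cong)
      then show ?thesis
        by (simp add: sum_distrib_left add_divide_distrib)
    qed
    also have "d k + d k * (\<Sum>i\<in>A. c i / (a k - a i)) = d k * (1 + (\<Sum>i\<in>A. c i / (a k - a i)))"
      by (simp add: distrib_left)
    also have "1 + (\<Sum>i\<in>A. c i / (a k - a i)) = (\<Prod>j\<in>A. 1 + d j / (a k - a j))"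
      by (subst IH) (auto dest: ki)
    finally show ?thesis
      using insert.hyps by (simp add: c_insert c_new add.assoc)
  qed
qed

lemma sums_fibres:
  fixes w :: "nat \<Rightarrow> 'a::banach" and f :: "nat \<Rightarrow> nat"
  assumes "summable (\<lambda>j. norm (w j))"
  shows "(\<lambda>i. \<Sum>j. if f j = i then w j else 0) sums (\<Sum>j. w j)"
proof -
  have abs_has_sum: "(u has_sum (\<Sum>j. u j)) UNIV" if "\<And>j. norm (u j) \<le> norm (w j)" for u :: "nat \<Rightarrow> 'a"
  proof -
    have "summable (\<lambda>j. norm (u j))"
      by (rule summable_comparison_test'[OF assms]) (simp add: that)
    then show ?thesis
      using norm_summable_imp_has_sum summable_norm_cancel summable_sums by blast
  qed
  have "bij_betw (\<lambda>j. (f j, j)) UNIV (SIGMA i:UNIV. f -` {i})"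
    by (rule bij_betwI[where g = snd]) auto
  moreover have "(w has_sum (\<Sum>j. w j)) UNIV"
    by (rule abs_has_sum) simp
  ultimately have Sigma: "((\<lambda>(i, j). w j) has_sum (\<Sum>j. w j)) (SIGMA i:UNIV. f -` {i})"
    by (simp add: has_sum_reindex_bij_betw[symmetric])
  have fibre: "(w has_sum (\<Sum>j. if f j = i then w j else 0)) (f -` {i})" for i
    using abs_has_sum[of "\<lambda>j. if f j = i then w j else 0"]
    by (subst has_sum_cong_neutral[where g = "\<lambda>j. if f j = i then w j else 0" and T = UNIV]) auto
  show ?thesis
    using has_sum_SigmaD[OF Sigma] fibre by (intro has_sum_imp_sums) simp
qed

lemma summable_norm_pole_series:
  fixes lam c :: "nat \<Rightarrow> 'a::real_normed_field"
  assumes "closed F" "range lam \<subseteq> F" "z \<notin> F" "summable (\<lambda>i. norm (c i))"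
  shows "summable (\<lambda>i. norm (c i / (z - lam i)))"
proof (rule summable_comparison_test'[where N = 0])
  have "F \<noteq> {}" using assms(2) by blast
  then have r: "infdist z F > 0"
    using assms by (intro infdist_pos_not_in_closed)
  show "summable (\<lambda>i. norm (c i) / infdist z F)"
    using assms(4) by (rule summable_divide)
  fix i
  have "infdist z F \<le> norm (z - lam i)"
    using infdist_le[of "lam i" F z] assms(2) by (auto simp: dist_norm)
  then show "norm (norm (c i / (z - lam i))) \<le> norm (c i) / infdist z F"
    using r by (simp add: norm_divide frac_le)
qed

lemma uniform_limit_pole_series:
  fixes lam c :: "nat \<Rightarrow> 'a::{real_normed_field,banach}"
  assumes "closed F" "range lam \<subseteq> F" "compact K" "K \<inter> F = {}" "summable (\<lambda>i. norm (c i))"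
  shows "uniform_limit K (\<lambda>n z. \<Sum>i<n. c i / (z - lam i)) (\<lambda>z. \<Sum>i. c i / (z - lam i)) sequentially"
proof (cases "K = {}")
  case False
  have "F \<noteq> {}" using assms(2) by blast
  then have r: "setdist K F > 0"
    using assms False by (simp add: setdist_gt_0_compact_closed)
  show ?thesis
  proof (rule Weierstrass_m_test)
    show "summable (\<lambda>i. norm (c i) / setdist K F)"
      using assms(5) by (rule summable_divide)
    fix i z assume "z \<in> K"
    then have "setdist K F \<le> norm (z - lam i)"
      using setdist_le_dist[of z K "lam i" F] assms(2) by (auto simp: dist_norm)
    then show "norm (c i / (z - lam i)) \<le> norm (c i) / setdist K F"
      using r by (simp add: norm_divide frac_le)
  qed
qed simp

lemma sum_half_powers: "(\<Sum>j<n. (1/2::real) ^ (j + 2)) = 1/2 - (1/2) ^ (n + 1)"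
  by (induction n) (simp_all add: field_simps)

section \<open>Choice of the zeros\<close>

locale pole_perturbation =
  fixes F :: "complex set" and lam :: "nat \<Rightarrow> complex" and \<gamma> :: "nat \<Rightarrow> real"
  assumes closed_F: "closed F" and perfect_F: "perfect_set F" and lam_in_F: "range lam \<subseteq> F"
    and \<gamma>_pos: "\<And>i. \<gamma> i > 0" and summable_\<gamma>: "summable \<gamma>"
begin

definition first_occurrences :: "nat set" where
  "first_occurrences = {i. \<forall>j<i. lam j \<noteq> lam i}"

definition first_index :: "nat \<Rightarrow> nat" where
  "first_index i = (LEAST j. lam j = lam i)"

lemma lam_first_index: "lam (first_index i) = lam i"
  unfolding first_index_def by (rule LeastI[of _ i]) simp

lemma first_index_le: "first_index i \<le> i"
  unfolding first_index_def by (rule Least_le) simp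

lemma first_index_mem_first_occurrences: "first_index i \<in> first_occurrences"
  unfolding first_occurrences_def using lam_first_index not_less_Least
  by (fastforce simp: first_index_def)

lemma lam_mem_F [simp]: "lam i \<in> F"
  using lam_in_F by blast

definition earlier_factors :: "nat \<Rightarrow> (nat \<Rightarrow> complex) \<Rightarrow> real" where
  "earlier_factors n d = (\<Prod>j<n. 1 + norm (d j) / norm (lam n - lam j))"

lemma earlier_factors_ge_1: "earlier_factors n d \<ge> 1"
  unfolding earlier_factors_def by (rule prod_ge_1) auto

text \<open>
  The bound by the distances to earlier poles makes the later factors of every residue multiply
  to at most 2; the bound involving \<open>earlier_factors\<close> controls the earlier ones.
\<close>
definition admissible :: "nat \<Rightarrow> (nat \<Rightarrow> complex) \<Rightarrow> complex \<Rightarrow> bool" where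
  "admissible n d x \<longleftrightarrow>
     (n \<in> first_occurrences \<longrightarrow> lam n - x \<in> F - range lam \<and>
        (\<forall>j<n. norm x \<le> (1/2) ^ (n + 2) * norm (lam n - lam j)) \<and>
        norm x * earlier_factors n d \<le> \<gamma> n / 3) \<and>
     (n \<notin> first_occurrences \<longrightarrow> x = 0)"

lemma admissible_prefix:
  assumes "\<And>j. j < n \<Longrightarrow> d j = d' j" "admissible n d x"
  shows "admissible n d' x"
proof -
  have "earlier_factors n d = earlier_factors n d'"
    unfolding earlier_factors_def using assms(1) by (intro prod.cong) auto
  with assms(2) show ?thesis by (simp add: admissible_def)
qed

lemma admissible_exists: "\<exists>x. admissible n d x"
proof (cases "n \<in> first_occurrences")
  case True
  let ?S = "F - range lam"
  let ?net = "at (lam n) within ?S"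
  have "F \<subseteq> closure ?S"
    by (rule perfect_closed_diff_countable_dense[OF closed_F perfect_F]) simp
  then have "lam n \<in> closure ?S"
    using lam_mem_F[of n] by blast
  moreover have "?S - {lam n} = ?S" by auto
  ultimately have nontrivial: "?net \<noteq> bot"
    using not_trivial_limit_within[of "lam n" ?S] by simp
  have "((\<lambda>a. norm (lam n - a)) \<longlongrightarrow> norm (lam n - lam n)) ?net"
    by (intro tendsto_intros)
  then have close: "eventually (\<lambda>a. norm (lam n - a) < r) ?net" if "r > 0" for r
    using order_tendstoD(2) that by simp
  define r where "r = \<gamma> n / (3 * earlier_factors n d)"
  have E: "earlier_factors n d > 0" using earlier_factors_ge_1[of n d] by simp
  have "r > 0" using \<gamma>_pos[of n] E by (simp add: r_def)
  have "eventually (\<lambda>a. a \<in> ?S) ?net"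
    by (simp add: eventually_at_filter)
  moreover have "eventually (\<lambda>a. norm (lam n - a) < r) ?net"
    using \<open>r > 0\<close> by (rule close)
  moreover have
    "eventually (\<lambda>a. \<forall>j\<in>{..<n}. norm (lam n - a) < (1/2) ^ (n + 2) * norm (lam n - lam j)) ?net"
    using True by (intro eventually_ball_finite ballI close) (auto simp: first_occurrences_def)
  ultimately have "eventually (\<lambda>a. a \<in> ?S \<and> norm (lam n - a) < r \<and>
      (\<forall>j\<in>{..<n}. norm (lam n - a) < (1/2) ^ (n + 2) * norm (lam n - lam j))) ?net"
    by (intro eventually_conj)
  then obtain a where a: "a \<in> ?S" "norm (lam n - a) < r"
    "\<forall>j\<in>{..<n}. norm (lam n - a) < (1/2) ^ (n + 2) * norm (lam n - lam j)"
    using eventually_happens'[OF nontrivial] by blast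
  have "norm (lam n - a) * earlier_factors n d \<le> \<gamma> n / 3"
    using a(2) E by (simp add: r_def field_simps)
  with True a have "admissible n d (lam n - a)"
    by (simp add: admissible_def less_imp_le)
  then show ?thesis ..
next
  case False
  then have "admissible n d 0" by (simp add: admissible_def)
  then show ?thesis ..
qed

definition \<delta> :: "nat \<Rightarrow> complex" where
  "\<delta> = (SOME \<delta>. \<forall>n. admissible n \<delta> (\<delta> n))"

lemma admissible_\<delta>: "admissible n \<delta> (\<delta> n)"
proof -
  have "\<exists>\<delta>. \<forall>n. admissible n \<delta> (\<delta> n)"
    using admissible_exists admissible_prefix by (rule choice_nat_prefix)
  from someI_ex[OF this] show ?thesis
    unfolding \<delta>_def by blast
qed

lemma \<delta>_first_occurrence:
  assumes "n \<in> first_occurrences"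
  shows "lam n - \<delta> n \<in> F - range lam"
    "\<And>j. j < n \<Longrightarrow> norm (\<delta> n) \<le> (1/2) ^ (n + 2) * norm (lam n - lam j)"
    "norm (\<delta> n) * earlier_factors n \<delta> \<le> \<gamma> n / 3"
  using admissible_\<delta>[of n] assms by (simp_all add: admissible_def)

lemma \<delta>_repeated: "n \<notin> first_occurrences \<Longrightarrow> \<delta> n = 0"
  using admissible_\<delta>[of n] by (simp add: admissible_def)

lemma \<delta>_eq_0_iff: "\<delta> n = 0 \<longleftrightarrow> n \<notin> first_occurrences"
proof
  assume "\<delta> n = 0"
  then show "n \<notin> first_occurrences" using \<delta>_first_occurrence(1)[of n] by auto
qed (rule \<delta>_repeated)

lemma zero_in_F: "lam n - \<delta> n \<in> F"
  using \<delta>_first_occurrence(1)[of n] \<delta>_repeated[of n]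
  by (cases "n \<in> first_occurrences") auto

lemma zero_not_pole: "\<delta> n \<noteq> 0 \<Longrightarrow> lam n - \<delta> n \<noteq> lam k"
  using \<delta>_first_occurrence(1)[of n] \<delta>_eq_0_iff[of n] by auto

lemma norm_\<delta>_le_dist: "j < n \<Longrightarrow> norm (\<delta> n) \<le> (1/2) ^ (n + 2) * norm (lam n - lam j)"
  using \<delta>_first_occurrence(2)[of n j] \<delta>_repeated[of n]
  by (cases "n \<in> first_occurrences") auto

lemma norm_\<delta>_earlier_factors: "norm (\<delta> n) * earlier_factors n \<delta> \<le> \<gamma> n / 3"
  using \<delta>_first_occurrence(3)[of n] \<delta>_repeated[of n] \<gamma>_pos[of n]
  by (cases "n \<in> first_occurrences") (auto simp: less_imp_le)

lemma norm_\<delta>_le: "norm (\<delta> n) \<le> \<gamma> n / 3"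
proof -
  have "norm (\<delta> n) \<le> norm (\<delta> n) * earlier_factors n \<delta>"
    using earlier_factors_ge_1[of n \<delta>] mult_left_mono[of 1 _ "norm (\<delta> n)"] by simp
  then show ?thesis using norm_\<delta>_earlier_factors[of n] by simp
qed

lemma summable_norm_\<delta>: "summable (\<lambda>n. norm (\<delta> n))"
  by (rule summable_comparison_test'[where N = 0, OF summable_divide[OF summable_\<gamma>, of 3]])
     (use norm_\<delta>_le in simp)

lemma inj_on_lam_\<delta>: "inj_on lam {i\<in>A. \<delta> i \<noteq> 0}"
proof (rule inj_onI)
  fix i j assume "i \<in> {i \<in> A. \<delta> i \<noteq> 0}" "j \<in> {i \<in> A. \<delta> i \<noteq> 0}" "lam i = lam j"
  then have "\<forall>k<i. lam k \<noteq> lam i" "\<forall>k<j. lam k \<noteq> lam j" "lam i = lam j"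
    by (auto simp: \<delta>_eq_0_iff first_occurrences_def)
  then show "i = j"
    by (cases i j rule: linorder_cases) auto
qed

section \<open>Residues of the limit product\<close>

definition factor :: "nat \<Rightarrow> nat \<Rightarrow> complex" where
  "factor i j = (if j = i then 1 else 1 + \<delta> j / (lam i - lam j))"

definition residue_approx :: "nat \<Rightarrow> nat \<Rightarrow> complex" where
  "residue_approx n i = (if i < n then \<delta> i * (\<Prod>j<n. factor i j) else 0)"

definition residue :: "nat \<Rightarrow> complex" where
  "residue i = \<delta> i * prodinf (factor i)"

lemma prod_eq_partial_fractions:
  assumes "z \<notin> F"
  shows "(\<Prod>i<n. 1 + \<delta> i / (z - lam i)) = 1 + (\<Sum>i. residue_approx n i / (z - lam i))"
proof -
  have "(\<Prod>j<n. factor i j) = (\<Prod>j\<in>{..<n} - {i}. 1 + \<delta> j / (lam i - lam j))" if "i < n" for i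
  proof -
    have "(\<Prod>j<n. factor i j) = factor i i * (\<Prod>j\<in>{..<n} - {i}. factor i j)"
      using that by (intro prod.remove) auto
    then show ?thesis
      by (auto simp: factor_def intro!: prod.cong)
  qed
  then have "(\<Sum>i<n. \<delta> i * (\<Prod>j\<in>{..<n} - {i}. 1 + \<delta> j / (lam i - lam j)) / (z - lam i))
      = (\<Sum>i. residue_approx n i / (z - lam i))"
    by (subst suminf_finite[of "{..<n}"]) (auto simp: residue_approx_def)
  moreover have "(\<Prod>i<n. 1 + \<delta> i / (z - lam i))
      = 1 + (\<Sum>i<n. \<delta> i * (\<Prod>j\<in>{..<n} - {i}. 1 + \<delta> j / (lam i - lam j)) / (z - lam i))"
    using assms by (intro prod_partial_fractions inj_on_lam_\<delta>) auto
  ultimately show ?thesis by simp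
qed

lemma norm_factor_sub_1_le: "i < j \<Longrightarrow> norm (factor i j - 1) \<le> (1/2) ^ (j + 2)"
  using norm_\<delta>_le_dist[of i j]
  by (cases "lam i = lam j") (auto simp: factor_def norm_divide norm_minus_commute divide_le_eq)

lemma factor_nonzero: "factor i j \<noteq> 0"
proof
  assume "factor i j = 0"
  then have "j \<noteq> i" "\<delta> j \<noteq> 0" "lam i \<noteq> lam j" "1 + \<delta> j / (lam i - lam j) = 0"
    by (auto simp: factor_def split: if_splits)
  then have "lam j - \<delta> j = lam i"
    by (simp add: field_simps)
  with zero_not_pole[OF \<open>\<delta> j \<noteq> 0\<close>] show False by blast
qed

lemma convergent_prod_factor: "convergent_prod (factor i)"
proof -
  have "summable (\<lambda>j. (1/2::real) ^ (j + 2))"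
    using summable_mult2[OF summable_geometric[of "1/2::real"], of "1/4"] by (simp add: power_add)
  then have "summable (\<lambda>j. norm (factor i j - 1))"
  proof (rule summable_comparison_test'[where N = "Suc i"])
    fix j assume "Suc i \<le> j"
    then show "norm (norm (factor i j - 1)) \<le> (1/2) ^ (j + 2)"
      using norm_factor_sub_1_le[of i j] by simp
  qed
  then have "convergent_prod (\<lambda>j. 1 + (factor i j - 1))"
    using factor_nonzero by (intro summable_imp_convergent_prod_complex) (auto simp: add_eq_0_iff)
  then show ?thesis by simp
qed

lemma prod_later_factors_le: "(\<Prod>j\<in>{i..<n}. 1 + norm (factor i j - 1)) \<le> 2"
proof -
  have "(\<Sum>j\<in>{i..<n}. norm (factor i j - 1)) \<le> (\<Sum>j\<in>{i..<n}. (1/2::real) ^ (j + 2))"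
    using norm_factor_sub_1_le by (intro sum_mono) (auto simp: factor_def le_less)
  also have "\<dots> \<le> (\<Sum>j<n. (1/2::real) ^ (j + 2))"
    by (rule sum_mono2) auto
  also have "\<dots> \<le> 1/2"
    unfolding sum_half_powers by simp
  finally have sum_le: "(\<Sum>j\<in>{i..<n}. norm (factor i j - 1)) \<le> 1/2" .
  have "(\<Prod>j\<in>{i..<n}. 1 + norm (factor i j - 1)) \<le> exp (\<Sum>j\<in>{i..<n}. norm (factor i j - 1))"
    by (rule prod_le_exp_sum) simp
  also have "\<dots> \<le> exp (1/2)"
    using sum_le by simp
  also have "\<dots> \<le> 2"
    by (rule exp_half_le2)
  finally show ?thesis .
qed

lemma earlier_factors_eq: "earlier_factors i \<delta> = (\<Prod>j<i. 1 + norm (factor i j - 1))"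
  unfolding earlier_factors_def by (intro prod.cong) (auto simp: factor_def norm_divide)

lemma norm_residue_approx_le: "norm (residue_approx n i) \<le> 2 * \<gamma> i / 3"
proof (cases "i < n")
  case True
  have "norm (residue_approx n i) = norm (\<delta> i) * (\<Prod>j<n. norm (factor i j))"
    using True by (simp add: residue_approx_def norm_mult prod_norm)
  also have "\<dots> \<le> norm (\<delta> i) * (\<Prod>j<n. 1 + norm (factor i j - 1))"
    using norm_triangle_ineq2[of "factor i _" 1]
    by (intro mult_left_mono prod_mono) (auto simp: algebra_simps)
  also have "(\<Prod>j<n. 1 + norm (factor i j - 1))
      = earlier_factors i \<delta> * (\<Prod>j\<in>{i..<n}. 1 + norm (factor i j - 1))"
    using True by (simp add: earlier_factors_eq lessThan_atLeast0 prod.atLeastLessThan_concat)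
  also have "norm (\<delta> i) * \<dots> \<le> norm (\<delta> i) * earlier_factors i \<delta> * 2"
    using prod_later_factors_le[of i n] earlier_factors_ge_1[of i \<delta>]
    by (simp add: mult.assoc mult_left_mono)
  also have "\<dots> \<le> 2 * \<gamma> i / 3"
    using norm_\<delta>_earlier_factors[of i] by simp
  finally show ?thesis .
qed (use \<gamma>_pos[of i] in \<open>simp add: residue_approx_def less_imp_le\<close>)

lemma residue_approx_tendsto: "(\<lambda>n. residue_approx n i) \<longlonglongrightarrow> residue i"
proof -
  have "(\<lambda>n. \<Prod>j<n. factor i j) \<longlonglongrightarrow> prodinf (factor i)"
    using convergent_prod_LIMSEQ[OF convergent_prod_factor] by (simp add: LIMSEQ_lessThan_iff_atMost)
  then have "(\<lambda>n. \<delta> i * (\<Prod>j<n. factor i j)) \<longlonglongrightarrow> residue i"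
    unfolding residue_def by (rule tendsto_mult_left)
  moreover have "eventually (\<lambda>n. \<delta> i * (\<Prod>j<n. factor i j) = residue_approx n i) sequentially"
    using eventually_gt_at_top[of i] by eventually_elim (simp add: residue_approx_def)
  ultimately show ?thesis by (rule Lim_transform_eventually)
qed

lemma norm_residue_le: "norm (residue i) \<le> 2 * \<gamma> i / 3"
  by (rule LIMSEQ_le_const2[OF tendsto_norm[OF residue_approx_tendsto]])
     (use norm_residue_approx_le in auto)

lemma residue_eq_0_iff: "residue i = 0 \<longleftrightarrow> i \<notin> first_occurrences"
  using prodinf_nonzero[OF convergent_prod_factor factor_nonzero] \<delta>_eq_0_iff[of i]
  by (auto simp: residue_def)

lemma residue_series_tendsto:
  assumes "z \<notin> F"
  shows "(\<lambda>n. \<Sum>i. residue_approx n i / (z - lam i)) \<longlonglongrightarrow> (\<Sum>i. residue i / (z - lam i))"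
proof -
  define M where "M i = 2 * \<gamma> i / 3 / infdist z F" for i
  have "F \<noteq> {}" using lam_in_F by blast
  then have "infdist z F > 0"
    using assms closed_F by (simp add: infdist_pos_not_in_closed)
  then have "norm (residue_approx n i) / norm (z - lam i) \<le> M i" for n i
    unfolding M_def using norm_residue_approx_le[of n i] infdist_le[of "lam i" F z]
    by (intro frac_le) (auto simp: dist_norm less_imp_le[OF \<gamma>_pos])
  then have "norm (residue_approx n i / (z - lam i)) \<le> M i" for n i
    by (simp add: norm_divide)
  then have "eventually (\<lambda>(i, n). norm (residue_approx n i / (z - lam i)) \<le> M i)
      (at_top \<times>\<^sub>F sequentially)"
    by (intro always_eventually) (simp add: case_prod_beta)
  moreover have "(\<lambda>n. residue_approx n i / (z - lam i)) \<longlonglongrightarrow> residue i / (z - lam i)" for i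
    using assms by (intro tendsto_divide residue_approx_tendsto tendsto_const) auto
  moreover have "summable M"
    unfolding M_def by (intro summable_divide summable_mult summable_\<gamma>)
  ultimately show ?thesis
    using tannerys_theorem[of "\<lambda>i n. residue_approx n i / (z - lam i)"] by simp
qed

lemma one_plus_\<delta>_div_nonzero:
  assumes "z \<notin> F"
  shows "1 + \<delta> i / (z - lam i) \<noteq> 0"
proof
  assume "1 + \<delta> i / (z - lam i) = 0"
  moreover have "z - lam i \<noteq> 0"
    using assms by auto
  ultimately have "z = lam i - \<delta> i"
    by (simp add: field_simps)
  then show False using zero_in_F[of i] assms by simp
qed

lemma convergent_prod_one_plus_\<delta>_div:
  assumes "z \<notin> F"
  shows "convergent_prod (\<lambda>i. 1 + \<delta> i / (z - lam i))"
proof (rule summable_imp_convergent_prod_complex)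
  show "summable (\<lambda>i. norm (\<delta> i / (z - lam i)))"
    using closed_F lam_in_F assms summable_norm_\<delta> by (rule summable_norm_pole_series)
  show "\<delta> i / (z - lam i) \<noteq> -1" for i
    using one_plus_\<delta>_div_nonzero[OF assms, of i] by (auto simp: add_eq_0_iff)
qed

lemma one_plus_residue_series:
  assumes "z \<notin> F"
  shows "1 + (\<Sum>i. residue i / (z - lam i)) = (\<Prod>i. 1 + \<delta> i / (z - lam i))"
proof (rule LIMSEQ_unique)
  show "(\<lambda>n. \<Prod>i<n. 1 + \<delta> i / (z - lam i)) \<longlonglongrightarrow> 1 + (\<Sum>i. residue i / (z - lam i))"
    using tendsto_add[OF tendsto_const residue_series_tendsto[OF assms], of 1]
    by (simp add: prod_eq_partial_fractions[OF assms])
  show "(\<lambda>n. \<Prod>i<n. 1 + \<delta> i / (z - lam i)) \<longlonglongrightarrow> (\<Prod>i. 1 + \<delta> i / (z - lam i))"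
    using convergent_prod_LIMSEQ[OF convergent_prod_one_plus_\<delta>_div[OF assms]]
    by (simp add: LIMSEQ_lessThan_iff_atMost)
qed

lemma one_plus_residue_series_nonzero:
  assumes "z \<notin> F"
  shows "1 + (\<Sum>i. residue i / (z - lam i)) \<noteq> 0"
  unfolding one_plus_residue_series[OF assms]
  using convergent_prod_one_plus_\<delta>_div[OF assms] one_plus_\<delta>_div_nonzero[OF assms]
  by (rule prodinf_nonzero)

section \<open>Coefficients at repeated poles\<close>

definition transfer :: "nat \<Rightarrow> real" where
  "transfer j = min (\<gamma> j) (norm (residue (first_index j))) * (1/2) ^ (j + 2)"

definition transferred :: "nat \<Rightarrow> real" where
  "transferred i = (\<Sum>j. if first_index j = i \<and> j \<notin> first_occurrences then transfer j else 0)"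

definition coeff :: "nat \<Rightarrow> complex" where
  "coeff i = residue i - of_real (transferred i)
     + (if i \<in> first_occurrences then 0 else of_real (transfer i))"

lemma transfer_pos: "transfer j > 0"
  using residue_eq_0_iff[of "first_index j"] first_index_mem_first_occurrences[of j] \<gamma>_pos[of j]
  by (simp add: transfer_def)

lemma transfer_le_\<gamma>: "transfer j \<le> \<gamma> j"
proof -
  have "transfer j \<le> \<gamma> j * (1/2) ^ (j + 2)"
    unfolding transfer_def by (intro mult_right_mono) auto
  also have "\<dots> \<le> \<gamma> j"
    using \<gamma>_pos[of j] by (intro mult_left_le power_le_one) (auto simp: less_imp_le)
  finally show ?thesis .
qed

lemma summable_transfer_fibre:
  "summable (\<lambda>j. if first_index j = i \<and> j \<notin> first_occurrences then transfer j else 0)"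
  by (rule summable_comparison_test'[where N = 0, OF summable_\<gamma>])
     (use transfer_pos transfer_le_\<gamma> in \<open>auto simp: abs_of_pos less_imp_le[OF \<gamma>_pos]\<close>)

lemma transferred_nonneg: "transferred i \<ge> 0"
  unfolding transferred_def
  by (rule suminf_nonneg[OF summable_transfer_fibre]) (simp add: less_imp_le[OF transfer_pos])

lemma transferred_le: "transferred i \<le> norm (residue i) / 2"
  unfolding transferred_def
proof (rule suminf_le_const[OF summable_transfer_fibre])
  fix n
  have "(\<Sum>j<n. if first_index j = i \<and> j \<notin> first_occurrences then transfer j else 0)
      \<le> (\<Sum>j<n. norm (residue i) * (1/2) ^ (j + 2))"
    by (intro sum_mono) (auto simp: transfer_def mult_right_mono)
  also have "\<dots> = norm (residue i) * (1/2 - (1/2) ^ (n + 1))"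
    by (simp only: sum_distrib_left[symmetric] sum_half_powers)
  also have "\<dots> \<le> norm (residue i) * (1/2)"
    by (intro mult_left_mono) auto
  finally show "(\<Sum>j<n. if first_index j = i \<and> j \<notin> first_occurrences then transfer j else 0)
      \<le> norm (residue i) / 2"
    by simp
qed

lemma transferred_repeated:
  assumes "i \<notin> first_occurrences"
  shows "transferred i = 0"
proof -
  have "first_index j \<noteq> i" for j
    using first_index_mem_first_occurrences[of j] assms by auto
  then show ?thesis by (simp add: transferred_def)
qed

lemma coeff_nonzero: "coeff i \<noteq> 0"
proof (cases "i \<in> first_occurrences")
  case True
  have "norm (residue i) - transferred i \<le> norm (coeff i)"
    using norm_triangle_ineq2[of "residue i" "of_real (transferred i)"] True transferred_nonneg[of i]
    by (simp add: coeff_def)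
  moreover have "norm (residue i) > 0"
    using True residue_eq_0_iff by simp
  ultimately have "norm (coeff i) > 0"
    using transferred_le[of i] by linarith
  then show ?thesis by simp
next
  case False
  then have "residue i = 0" by (simp add: residue_eq_0_iff)
  then show ?thesis
    using False transfer_pos[of i] by (simp add: coeff_def transferred_repeated)
qed

lemma norm_coeff_le: "norm (coeff i) \<le> \<gamma> i"
proof (cases "i \<in> first_occurrences")
  case True
  have "norm (coeff i) \<le> norm (residue i) + transferred i"
    using norm_triangle_ineq4[of "residue i" "of_real (transferred i)"] True transferred_nonneg[of i]
    by (simp add: coeff_def)
  then show ?thesis
    using transferred_le[of i] norm_residue_le[of i] by simp
next
  case False
  then have "residue i = 0" by (simp add: residue_eq_0_iff)
  then show ?thesis
    using False transfer_pos[of i] transfer_le_\<gamma>[of i] by (simp add: coeff_def transferred_repeated)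
qed

lemma coeff_series_eq_residue_series:
  assumes "z \<notin> F"
  shows "(\<Sum>i. coeff i / (z - lam i)) = (\<Sum>i. residue i / (z - lam i))"
proof -
  define w where
    "w j = (if j \<in> first_occurrences then 0 else of_real (transfer j)) / (z - lam j)" for j
  have summable: "summable (\<lambda>i. norm (a i / (z - lam i)))"
    if "\<And>i. norm (a i) \<le> \<gamma> i" for a :: "nat \<Rightarrow> complex"
  proof (rule summable_norm_pole_series[OF closed_F lam_in_F assms])
    show "summable (\<lambda>i. norm (a i))"
      by (rule summable_comparison_test'[where N = 0, OF summable_\<gamma>]) (simp add: that)
  qed
  have w: "summable (\<lambda>j. norm (w j))"
    unfolding w_def using transfer_pos transfer_le_\<gamma> \<gamma>_pos
    by (intro summable) (simp add: less_imp_le)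
  have "(\<Sum>j. if first_index j = i then w j else 0) = of_real (transferred i) / (z - lam i)" for i
  proof -
    have "(\<lambda>j. if first_index j = i then w j else 0)
        = (\<lambda>j. of_real (if first_index j = i \<and> j \<notin> first_occurrences then transfer j else 0)
            / (z - lam i))"
      using lam_first_index by (auto simp: w_def fun_eq_iff)
    then have "(\<Sum>j. if first_index j = i then w j else 0)
        = (\<Sum>j. of_real (if first_index j = i \<and> j \<notin> first_occurrences then transfer j else 0)
            / (z - lam i))"
      by simp
    also have "\<dots> = (\<Sum>j. of_real (if first_index j = i \<and> j \<notin> first_occurrences
        then transfer j else 0)) / (z - lam i)"
      by (intro suminf_divide summable_of_real summable_transfer_fibre)
    also have "\<dots> = of_real (transferred i) / (z - lam i)"
      unfolding transferred_def by (simp add: suminf_of_real[OF summable_transfer_fibre])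
    finally show ?thesis .
  qed
  then have transferred_sums: "(\<lambda>i. of_real (transferred i) / (z - lam i)) sums (\<Sum>j. w j)"
    using sums_fibres[OF w, of first_index] by simp
  have "norm (residue i) \<le> \<gamma> i" for i
    using norm_residue_le[of i] \<gamma>_pos[of i] by linarith
  then have "summable (\<lambda>i. norm (residue i / (z - lam i)))"
    by (rule summable)
  then have "(\<lambda>i. residue i / (z - lam i) - of_real (transferred i) / (z - lam i) + w i)
      sums ((\<Sum>i. residue i / (z - lam i)) - (\<Sum>j. w j) + (\<Sum>j. w j))"
    using transferred_sums summable_norm_cancel[OF w]
    by (intro sums_add sums_diff) (auto dest: summable_norm_cancel intro: summable_sums)
  moreover have "coeff i / (z - lam i) = residue i / (z - lam i) - of_real (transferred i) / (z - lam i) + w i" for i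
    by (simp add: coeff_def w_def diff_divide_distrib add_divide_distrib)
  ultimately show ?thesis
    by (simp add: sums_iff)
qed

end

theorem proposition2:
  fixes F :: "complex set" and lam :: "nat \<Rightarrow> complex" and \<gamma> :: "nat \<Rightarrow> real"
  assumes "closed F" and "perfect_set F"
    and "range lam \<subseteq> F" and "F \<subseteq> closure (range lam)"
    and "\<And>i. \<gamma> i > 0" and "summable \<gamma>"
  shows "\<exists>c :: nat \<Rightarrow> complex.
           (\<forall>i. c i \<noteq> 0) \<and>
           (\<forall>i. norm (c i) \<le> \<gamma> i) \<and>
           (\<forall>K. compact K \<and> K \<subseteq> - F \<longrightarrow>
              uniform_limit K (\<lambda>n z. \<Sum>i<n. c i / (z - lam i)) (\<lambda>z. \<Sum>i. c i / (z - lam i)) sequentially) \<and>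
           (\<forall>z. z \<notin> F \<longrightarrow> (\<Sum>i. c i / (z - lam i)) - 1 \<noteq> 0)"
proof -
  interpret pole_perturbation F lam \<gamma>
    using assms by unfold_locales auto
  define c where "c i = - coeff i" for i
  have summable_c: "summable (\<lambda>i. norm (c i))"
    by (rule summable_comparison_test'[where N = 0, OF summable_\<gamma>]) (simp add: c_def norm_coeff_le)
  have series_minus_1: "(\<Sum>i. c i / (z - lam i)) - 1 = - (1 + (\<Sum>i. residue i / (z - lam i)))"
    if "z \<notin> F" for z
  proof -
    have "summable (\<lambda>i. coeff i / (z - lam i))"
      using summable_norm_pole_series[OF closed_F lam_in_F that, of coeff] summable_c
      by (simp add: c_def summable_norm_cancel)
    then show ?thesis
      using coeff_series_eq_residue_series[OF that] by (simp add: c_def suminf_minus)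
  qed
  have "(\<Sum>i. c i / (z - lam i)) - 1 \<noteq> 0" if "z \<notin> F" for z
    unfolding series_minus_1[OF that] neg_equal_0_iff_equal
    by (rule one_plus_residue_series_nonzero[OF that])
  moreover have "uniform_limit K (\<lambda>n z. \<Sum>i<n. c i / (z - lam i)) (\<lambda>z. \<Sum>i. c i / (z - lam i)) sequentially"
    if "compact K" "K \<subseteq> - F" for K
    using closed_F lam_in_F that summable_c by (intro uniform_limit_pole_series) auto
  ultimately show ?thesis
    using coeff_nonzero norm_coeff_le by (intro exI[of _ c]) (simp add: c_def)
qed

end
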